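(* There exist $\delta_1>0$ and $C_1>0$ such that for every $(\ell,\xi)\in[-\delta_1,\delta_1]\times[-\delta_1,\delta_1]$, $|\lambda^+_{0,\ell,\xi}-\lambda^+_{-1,\ell,\xi}|\ge C_1|(\ell,\xi)|$ and $|\lambda^-_{0,\ell,\xi}-\lambda^-_{1,\ell,\xi}|\ge C_1|(\ell,\xi)|$, and for every $n\in\mathbb Z$ and sign $\#\in\{+,-\}$ with $(n,\#)\notin\{(0,+),(0,-),(1,-),(-1,+)\}$, $|\lambda^\#_{n,\ell,\xi}|\ge C_1$.
   Context: Fix $\kappa>0$ and set $\mu_0:=\kappa/\tanh(\kappa)$. Let $F:\mathbb R\to\mathbb R$ be the odd analytic function with $F(r)=\sqrt{r\tanh r}$ for $r\ge0$. For $n\in\mathbb Z$ and $(\ell,\xi)\in\mathbb R^2$ set $|n\kappa|_{\ell,\xi}:=\sqrt{(n\kappa+\xi)^2+\ell^2}$ and $\lambda^\pm_{n,\ell,\xi}:=i\big(n\kappa+\xi\pm\sqrt{\mu_0}\,F(|n\kappa|_{\ell,\xi})\big)$; these are the eigenvalues of $\begin{pmatrix} i(n\kappa+\xi) & F(|n\kappa|_{\ell,\xi})^2\\ -\mu_0 & i(n\kappa+\xi)\end{pmatrix}$. Here $|(\ell,\xi)|=\sqrt{\ell^2+\xi^2}$. *)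

theory Defs
  imports "HOL-Analysis.Analysis"
begin

definition mu0 :: "real \<Rightarrow> real" where
  "mu0 \<kappa> = \<kappa> / tanh \<kappa>"

definition Fdisp :: "real \<Rightarrow> real" where
  "Fdisp r = (if r \<ge> 0 then sqrt (r * tanh r) else - sqrt ((- r) * tanh (- r)))"

definition nkabs :: "real \<Rightarrow> int \<Rightarrow> real \<Rightarrow> real \<Rightarrow> real" where
  "nkabs \<kappa> n l \<xi> = sqrt ((of_int n * \<kappa> + \<xi>)\<^sup>2 + l\<^sup>2)"

text \<open>lam \<kappa> s n l \<xi>: s = True for the sign +, s = False for the sign -.\<close>
definition lam :: "real \<Rightarrow> bool \<Rightarrow> int \<Rightarrow> real \<Rightarrow> real \<Rightarrow> complex" where
  "lam \<kappa> s n l \<xi> = \<i> * complex_of_real (of_int n * \<kappa> + \<xi> +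
      (if s then 1 else -1) * sqrt (mu0 \<kappa>) * Fdisp (nkabs \<kappa> n l \<xi>))"

end

theory Submission
  imports Defs
begin

text \<open>Write \<open>\<omega>(r) = \<surd>\<mu>\<^sub>0 F(r)\<close>, so that \<open>\<lambda>\<^sup>\<plusminus>\<^sub>n = i(n\<kappa> + \<xi> \<plusminus> \<omega>(|n\<kappa>|))\<close> and \<open>\<omega>(\<kappa>) = \<kappa>\<close>;
  hence \<open>\<lambda>\<^sup>+\<^sub>0\<close> and \<open>\<lambda>\<^sup>+\<^sub>-\<^sub>1\<close> both vanish at \<open>(\<ell>,\<xi>) = 0\<close>. Their difference is
  \<open>\<kappa> + \<omega>(\<rho>) - \<omega>(|(\<xi>-\<kappa>,\<ell>)|)\<close> with \<open>\<rho> = |(\<ell>,\<xi>)|\<close>, which is at least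
  \<open>(\<omega>'(0) - \<omega>'(\<kappa>))\<rho> - O(\<rho>\<^sup>2)\<close>; the slope gap \<open>\<omega>'(\<kappa>) < \<omega>'(0) = \<surd>\<mu>\<^sub>0\<close> reduces to the
  elementary inequality \<open>\<kappa>(1 - tanh \<kappa>)\<^sup>2 < tanh \<kappa>\<close>. All other eigenvalues stay away from 0:
  either \<open>n\<kappa> + \<xi>\<close> and \<open>\<plusminus>\<omega>\<close> have the same sign, or \<open>|n\<kappa> + \<xi>| \<ge> 2\<kappa> - \<delta>\<close>, where \<open>\<omega>(r) \<le> \<theta>r\<close>
  with \<open>\<theta> < 1\<close> because \<open>\<omega>(r)/r\<close> decreases strictly and equals 1 at \<open>r = \<kappa>\<close>.
  The minus branch reduces to the plus branch via \<open>\<lambda>\<^sup>-\<^sub>n(\<ell>,\<xi>) = -\<lambda>\<^sup>+\<^sub>-\<^sub>n(\<ell>,-\<xi>)\<close>.\<close>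

lemma tanh_le_self:
  fixes x :: real
  assumes "0 \<le> x"
  shows "tanh x \<le> x"
proof -
  have "(\<lambda>x. x - tanh x) 0 \<le> (\<lambda>x. x - tanh x) x"
  proof (rule DERIV_nonneg_imp_nondecreasing[OF assms])
    fix y :: real
    show "\<exists>d. ((\<lambda>x. x - tanh x) has_real_derivative d) (at y) \<and> 0 \<le> d"
      by (intro exI[of _ "tanh y ^ 2"]) (auto intro!: derivative_eq_intros)
  qed
  then show ?thesis by simp
qed

lemma sinh_ge_self:
  fixes x :: real
  assumes "0 \<le> x"
  shows "x \<le> sinh x"
proof -
  have "(\<lambda>x. sinh x - x) 0 \<le> (\<lambda>x. sinh x - x) x"
  proof (rule DERIV_nonneg_imp_nondecreasing[OF assms])
    fix y :: real
    show "\<exists>d. ((\<lambda>x. sinh x - x) has_real_derivative d) (at y) \<and> 0 \<le> d"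
      by (intro exI[of _ "cosh y - 1"]) (auto intro!: derivative_eq_intros simp: cosh_real_ge_1)
  qed
  then show ?thesis by simp
qed

lemma tanh_ge_div_one_plus:
  fixes x :: real
  assumes "0 \<le> x"
  shows "x / (1 + x) \<le> tanh x"
proof -
  define e where "e = exp (-2 * x)"
  have "0 < e" by (simp add: e_def)
  have "e * (1 + 2 * x) \<le> e * exp (2 * x)"
    using \<open>0 < e\<close> exp_ge_add_one_self[of "2 * x"] by simp
  also have "\<dots> = 1" by (simp add: e_def flip: exp_add)
  finally have "x * (1 + e) \<le> (1 - e) * (1 + x)" by (simp add: algebra_simps)
  then have "x / (1 + x) \<le> (1 - e) / (1 + e)"
    using assms \<open>0 < e\<close> by (simp add: divide_simps)
  then show ?thesis unfolding tanh_real_altdef e_def .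
qed

lemma one_minus_tanh_sq: "1 - tanh x ^ 2 = 1 / cosh x ^ 2" for x :: real
proof -
  have "cosh x \<noteq> 0" by (metis cosh_real_pos less_irrefl)
  then have "1 - tanh x ^ 2 = (cosh x ^ 2 - sinh x ^ 2) / cosh x ^ 2"
    by (simp add: tanh_def power_divide field_simps)
  then show ?thesis by (simp add: cosh_square_eq)
qed

lemma mult_one_minus_tanh_sq_le_tanh:
  fixes x :: real
  assumes "0 \<le> x"
  shows "x * (1 - tanh x ^ 2) \<le> tanh x"
proof -
  have "2 * x \<le> sinh (2 * x)" using sinh_ge_self assms by simp
  then have "x \<le> sinh x * cosh x" by (simp add: sinh_double)
  then have "x / cosh x ^ 2 \<le> sinh x * cosh x / cosh x ^ 2"
    by (simp add: divide_right_mono)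
  also have "\<dots> = tanh x" by (simp add: tanh_def power2_eq_square)
  finally show ?thesis unfolding one_minus_tanh_sq by simp
qed

lemma tanh_add_le:
  fixes x y :: real
  assumes "0 \<le> x" "0 \<le> y"
  shows "tanh (x + y) \<le> tanh x + y * (1 - tanh x ^ 2)"
proof -
  define t u where "t = tanh x" and "u = tanh y"
  have t: "0 \<le> t" "t < 1" using assms by (auto simp: t_def tanh_real_lt_1)
  have u: "0 \<le> u" "u \<le> y" using assms tanh_le_self[of y] by (auto simp: u_def)
  have s: "0 \<le> 1 - t ^ 2" using t by (simp add: power_le_one)
  have "1 + t * u \<noteq> 0" using t u by (simp add: add_nonneg_eq_0_iff)
  then have "tanh (x + y) = t + u * (1 - t ^ 2) / (1 + t * u)"
    by (simp add: tanh_add flip: t_def u_def) (simp add: field_simps power2_eq_square)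
  also have "\<dots> \<le> t + u * (1 - t ^ 2) / 1"
    using t u s by (intro add_left_mono divide_left_mono) (auto intro: add_pos_nonneg)
  also have "\<dots> \<le> t + y * (1 - t ^ 2)"
    using u s by (simp add: mult_right_mono)
  finally show ?thesis by (simp add: t_def)
qed

lemma tanh_div_self_strict_antimono:
  fixes x y :: real
  assumes "0 < x" "x < y"
  shows "tanh y / y < tanh x / x"
proof -
  define d t u where "d = y - x" and "t = tanh x" and "u = tanh d"
  have d: "0 < d" using assms by (simp add: d_def)
  have t: "0 < t" "t < 1" using assms by (auto simp: t_def tanh_real_lt_1)
  have u: "0 < u" "u \<le> d" using d tanh_le_self[of d] by (auto simp: u_def)
  have "x * u * (1 - t ^ 2) \<le> u * t"
    using mult_one_minus_tanh_sq_le_tanh[of x] assms u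
    by (simp add: t_def mult.commute mult.left_commute mult_left_mono)
  also have "\<dots> \<le> d * t" using u t by (simp add: mult_right_mono)
  also have "\<dots> < d * t * (1 + t * u)" using d t u by simp
  finally have "x * (t + u) < y * t * (1 + t * u)"
    by (simp add: d_def algebra_simps power2_eq_square)
  moreover have "tanh y = (t + u) / (1 + t * u)"
    using tanh_add[of x d] by (simp add: d_def t_def u_def)
  moreover have "0 < 1 + t * u" using t u by (simp add: add_pos_pos)
  ultimately have "x * tanh y < y * t"
    by (simp add: pos_divide_less_eq mult.assoc)
  then have "x * tanh y < y * tanh x" by (simp add: t_def)
  then show ?thesis using assms by (simp add: divide_simps mult.commute)
qed

lemma mult_sq_one_minus_tanh_less_tanh:
  fixes x :: real
  assumes "0 < x"
  shows "x * (1 - tanh x) ^ 2 < tanh x"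
proof -
  define e where "e = exp (-2 * x)"
  have e: "0 < e" by (simp add: e_def)
  have t: "tanh x = (1 - e) / (1 + e)" unfolding tanh_real_altdef e_def ..
  have "1 + 4 * x < exp (4 * x)"
    using exp_minus_greater[of "- 4 * x"] assms by simp
  then have "e ^ 2 * (1 + 4 * x) < e ^ 2 * exp (4 * x)" using e by simp
  also have "\<dots> = 1" by (simp add: e_def power2_eq_square flip: exp_add)
  finally have "4 * x * e ^ 2 < (1 - e) * (1 + e)" by (simp add: algebra_simps power2_eq_square)
  have "x * (1 - tanh x) ^ 2 = 4 * x * e ^ 2 / (1 + e) ^ 2"
    using e by (simp add: t field_simps power2_eq_square)
  also have "\<dots> < (1 - e) * (1 + e) / (1 + e) ^ 2"
    using \<open>4 * x * e ^ 2 < (1 - e) * (1 + e)\<close> e by (intro divide_strict_right_mono) auto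
  also have "\<dots> = tanh x" using e by (simp add: t power2_eq_square)
  finally show ?thesis .
qed

lemma sqrt_le_tangent:
  fixes x y :: real
  assumes "0 \<le> x" "0 < y"
  shows "sqrt x \<le> sqrt y + (x - y) / (2 * sqrt y)"
proof -
  define a b where "a = sqrt x" and "b = sqrt y"
  have "0 < b" using assms by (simp add: b_def)
  have "0 \<le> (a - b) ^ 2" by simp
  then have "a * (2 * b) \<le> b * (2 * b) + (a ^ 2 - b ^ 2)"
    by (simp add: power2_eq_square algebra_simps)
  then have "a \<le> b + (a ^ 2 - b ^ 2) / (2 * b)"
    using \<open>0 < b\<close> by (simp add: field_simps)
  then show ?thesis using assms by (simp add: a_def b_def)
qed

definition omega :: "real \<Rightarrow> real \<Rightarrow> real" where
  "omega \<kappa> r = sqrt (mu0 \<kappa>) * Fdisp r"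

lemma Fdisp_nonneg_eq: "0 \<le> r \<Longrightarrow> Fdisp r = sqrt (r * tanh r)"
  by (simp add: Fdisp_def)

lemma mu0_pos: "0 < \<kappa> \<Longrightarrow> 0 < mu0 \<kappa>"
  by (simp add: mu0_def)

lemma sqrt_mu0_eq:
  assumes "0 < \<kappa>"
  shows "sqrt (mu0 \<kappa>) = sqrt (\<kappa> * tanh \<kappa>) / tanh \<kappa>"
proof -
  have t: "0 < tanh \<kappa>" using assms by simp
  have "sqrt (\<kappa> * tanh \<kappa>) / tanh \<kappa> = sqrt \<kappa> * sqrt (tanh \<kappa>) / (sqrt (tanh \<kappa>) * sqrt (tanh \<kappa>))"
    using t by (simp add: real_sqrt_mult)
  also have "\<dots> = sqrt \<kappa> / sqrt (tanh \<kappa>)" using t by (simp add: field_simps)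
  finally show ?thesis by (simp add: mu0_def real_sqrt_divide)
qed

lemma omega_nonneg: "0 < \<kappa> \<Longrightarrow> 0 \<le> r \<Longrightarrow> 0 \<le> omega \<kappa> r"
  by (simp add: omega_def Fdisp_nonneg_eq mu0_pos less_imp_le)

lemma omega_mono:
  assumes "0 < \<kappa>" "0 \<le> a" "a \<le> b"
  shows "omega \<kappa> a \<le> omega \<kappa> b"
proof -
  have "a * tanh a \<le> b * tanh b" using assms by (intro mult_mono) auto
  then show ?thesis
    using assms by (simp add: omega_def Fdisp_nonneg_eq mu0_pos mult_left_mono)
qed

lemma omega_self: "0 < \<kappa> \<Longrightarrow> omega \<kappa> \<kappa> = \<kappa>"
  by (simp add: omega_def Fdisp_nonneg_eq sqrt_mu0_eq)

lemma omega_div_self: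
  assumes "0 < \<kappa>" "0 < r"
  shows "omega \<kappa> r / r = sqrt (mu0 \<kappa>) * sqrt (tanh r / r)"
proof -
  have "sqrt (r * tanh r) / r = sqrt (tanh r / r)"
    using assms by (simp add: real_sqrt_divide real_sqrt_mult field_simps)
  then show ?thesis using assms by (simp add: omega_def Fdisp_nonneg_eq flip: times_divide_eq_right)
qed

lemma omega_div_self_strict_antimono:
  assumes "0 < \<kappa>" "0 < x" "x < y"
  shows "omega \<kappa> y / y < omega \<kappa> x / x"
  using assms tanh_div_self_strict_antimono[of x y]
  by (simp add: omega_div_self mu0_pos)

lemma omega_le_contraction:
  assumes "0 < \<kappa>"
  obtains \<theta> where "0 \<le> \<theta>" "\<theta> < 1" "\<And>r. 3 * \<kappa> / 2 \<le> r \<Longrightarrow> omega \<kappa> r \<le> \<theta> * r"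
proof
  define y where "y = 3 * \<kappa> / 2"
  have y: "0 < y" "\<kappa> < y" using assms by (simp_all add: y_def)
  show "0 \<le> omega \<kappa> y / y" using assms y by (simp add: omega_nonneg)
  show "omega \<kappa> y / y < 1"
    using omega_div_self_strict_antimono[OF assms assms y(2)] assms by (simp add: omega_self)
  fix r assume "3 * \<kappa> / 2 \<le> r"
  then have "y \<le> r" "0 < r" using y by (simp_all add: y_def)
  then have "omega \<kappa> r / r \<le> omega \<kappa> y / y"
    using omega_div_self_strict_antimono[OF assms y(1)] by (cases "y = r") (auto intro: less_imp_le)
  then have "omega \<kappa> r / r * r \<le> omega \<kappa> y / y * r"
    using \<open>0 < r\<close> by (intro mult_right_mono) auto
  then show "omega \<kappa> r \<le> omega \<kappa> y / y * r" using \<open>0 < r\<close> by simp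
qed

lemma omega_ge_linear:
  assumes "0 < \<kappa>" "0 \<le> \<rho>"
  shows "sqrt (mu0 \<kappa>) * (\<rho> * (1 - \<rho>)) \<le> omega \<kappa> \<rho>"
proof -
  have "\<rho> * (1 - \<rho>) * (1 + \<rho>) \<le> \<rho>" using assms by (simp add: algebra_simps power2_eq_square)
  then have "\<rho> * (1 - \<rho>) \<le> \<rho> / (1 + \<rho>)" using assms by (simp add: le_divide_eq)
  also have "\<dots> \<le> sqrt (\<rho> * tanh \<rho>)"
  proof (rule real_le_rsqrt)
    have "\<rho> / (1 + \<rho>) \<le> \<rho>" using assms by (simp add: divide_le_eq algebra_simps)
    then have "\<rho> / (1 + \<rho>) * (\<rho> / (1 + \<rho>)) \<le> \<rho> * (\<rho> / (1 + \<rho>))"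
      using assms by (intro mult_right_mono) auto
    then have "(\<rho> / (1 + \<rho>)) ^ 2 \<le> \<rho> * (\<rho> / (1 + \<rho>))"
      by (simp only: power2_eq_square)
    also have "\<dots> \<le> \<rho> * tanh \<rho>"
      using tanh_ge_div_one_plus[of \<rho>] assms by (intro mult_left_mono) auto
    finally show "(\<rho> / (1 + \<rho>)) ^ 2 \<le> \<rho> * tanh \<rho>" .
  qed
  finally show ?thesis
    using assms by (simp add: omega_def Fdisp_nonneg_eq mu0_pos mult_left_mono)
qed

text \<open>The linear coefficient is \<open>\<omega>'(\<kappa>)\<close>: linearise \<open>sqrt\<close> at \<open>\<kappa> tanh \<kappa>\<close> and \<open>tanh\<close> at \<open>\<kappa>\<close>.\<close>

lemma omega_add_le_quadratic:
  assumes \<kappa>: "0 < \<kappa>" and \<rho>: "0 \<le> \<rho>"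
  defines "t \<equiv> tanh \<kappa>"
  shows "omega \<kappa> (\<kappa> + \<rho>) \<le> \<kappa> + (\<kappa> * (1 - t ^ 2) + t) / (2 * t) * \<rho> + (1 - t ^ 2) / (2 * t) * \<rho> ^ 2"
proof -
  define h where "h = (\<kappa> + \<rho>) * tanh (\<kappa> + \<rho>)"
  have t: "0 < t" "t < 1" using \<kappa> by (simp_all add: t_def tanh_real_lt_1)
  have "0 < \<kappa> * t" using \<kappa> t by simp
  have h: "h \<le> (\<kappa> + \<rho>) * (t + \<rho> * (1 - t ^ 2))"
    unfolding h_def t_def using \<kappa> \<rho> tanh_add_le[of \<kappa> \<rho>] by (intro mult_left_mono) auto
  have "omega \<kappa> (\<kappa> + \<rho>) = sqrt (\<kappa> * t) / t * sqrt h"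
    using \<kappa> \<rho> by (simp add: omega_def Fdisp_nonneg_eq sqrt_mu0_eq h_def t_def)
  also have "\<dots> \<le> sqrt (\<kappa> * t) / t * (sqrt (\<kappa> * t) + (h - \<kappa> * t) / (2 * sqrt (\<kappa> * t)))"
    using \<kappa> \<rho> t \<open>0 < \<kappa> * t\<close> by (intro mult_left_mono sqrt_le_tangent) (simp_all add: h_def)
  also have "\<dots> = \<kappa> + (h - \<kappa> * t) / (2 * t)"
  proof -
    have "sqrt (\<kappa> * t) * sqrt (\<kappa> * t) = \<kappa> * t" "0 < sqrt (\<kappa> * t)"
      using \<open>0 < \<kappa> * t\<close> by simp_all
    then show ?thesis using t \<kappa> by (simp add: distrib_left)
  qed
  also have "\<dots> \<le> \<kappa> + ((\<kappa> + \<rho>) * (t + \<rho> * (1 - t ^ 2)) - \<kappa> * t) / (2 * t)"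
    using h t by (intro add_left_mono divide_right_mono) auto
  also have "\<dots> = \<kappa> + (\<kappa> * (1 - t ^ 2) + t) / (2 * t) * \<rho> + (1 - t ^ 2) / (2 * t) * \<rho> ^ 2"
    using t by (simp add: field_simps power2_eq_square)
  finally show ?thesis .
qed

lemma omega_slope_less_sqrt_mu0:
  assumes \<kappa>: "0 < \<kappa>"
  defines "t \<equiv> tanh \<kappa>"
  shows "(\<kappa> * (1 - t ^ 2) + t) / (2 * t) < sqrt (mu0 \<kappa>)"
proof -
  define X where "X = \<kappa> * (1 - t ^ 2) + t"
  have t: "0 < t" "t < 1" using assms by (simp_all add: t_def tanh_real_lt_1)
  have "t < (1 + t) ^ 2 * \<kappa>"
  proof -
    have "1 < (1 + t) ^ 2" using t by (intro one_less_power) auto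
    have "t \<le> \<kappa>" using tanh_le_self[of \<kappa>] \<kappa> by (simp add: t_def)
    also have "\<kappa> < (1 + t) ^ 2 * \<kappa>"
      using mult_strict_right_mono[OF \<open>1 < (1 + t) ^ 2\<close> \<kappa>] by simp
    finally show ?thesis .
  qed
  moreover have "(1 - t) ^ 2 * \<kappa> < t"
    using mult_sq_one_minus_tanh_less_tanh[OF \<kappa>] by (simp add: t_def mult.commute)
  ultimately have "((1 + t) ^ 2 * \<kappa> - t) * ((1 - t) ^ 2 * \<kappa> - t) < 0"
    by (intro mult_pos_neg) auto
  also have "((1 + t) ^ 2 * \<kappa> - t) * ((1 - t) ^ 2 * \<kappa> - t) = X ^ 2 - 4 * (\<kappa> * t)"
    by (simp add: X_def power2_eq_square algebra_simps)
  also have "4 * (\<kappa> * t) = (2 * sqrt (\<kappa> * t)) ^ 2"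
    using \<kappa> t by (simp add: power_mult_distrib)
  finally have "X ^ 2 < (2 * sqrt (\<kappa> * t)) ^ 2" by simp
  then have "X < 2 * sqrt (\<kappa> * t)"
    by (rule power_less_imp_less_base) (use \<kappa> t in simp)
  then have "X / (2 * t) < 2 * sqrt (\<kappa> * t) / (2 * t)"
    using t by (intro divide_strict_right_mono) auto
  then show ?thesis using \<kappa> by (simp add: X_def sqrt_mu0_eq t_def)
qed

lemma omega_gap_near_self:
  assumes \<kappa>: "0 < \<kappa>"
  obtains c \<rho>0 where "0 < c" "0 < \<rho>0"
    "\<And>\<rho> r. 0 \<le> \<rho> \<Longrightarrow> \<rho> \<le> \<rho>0 \<Longrightarrow> 0 \<le> r \<Longrightarrow> r \<le> \<kappa> + \<rho> \<Longrightarrow>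
       c * \<rho> \<le> \<kappa> + omega \<kappa> \<rho> - omega \<kappa> r"
proof -
  define t m where "t = tanh \<kappa>" and "m = sqrt (mu0 \<kappa>)"
  define A B where "A = (\<kappa> * (1 - t ^ 2) + t) / (2 * t)" and "B = (1 - t ^ 2) / (2 * t)"
  define c where "c = (m - A) / 2"
  have t: "0 < t" "t < 1" using \<kappa> by (simp_all add: t_def tanh_real_lt_1)
  have "0 < c" using omega_slope_less_sqrt_mu0[OF \<kappa>] by (simp add: c_def A_def m_def t_def)
  have "0 < m + B" using \<kappa> t by (simp add: m_def B_def mu0_pos add_pos_nonneg power_le_one)
  show ?thesis
  proof (rule that[of c "c / (m + B)"])
    show "0 < c" "0 < c / (m + B)" using \<open>0 < c\<close> \<open>0 < m + B\<close> by simp_all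
    fix \<rho> r
    assume \<rho>: "0 \<le> \<rho>" "\<rho> \<le> c / (m + B)" and r: "0 \<le> r" "r \<le> \<kappa> + \<rho>"
    have "omega \<kappa> r \<le> omega \<kappa> (\<kappa> + \<rho>)" using \<kappa> \<rho> r by (intro omega_mono) auto
    also have "\<dots> \<le> \<kappa> + A * \<rho> + B * \<rho> ^ 2"
      using omega_add_le_quadratic[OF \<kappa> \<rho>(1)] by (simp add: A_def B_def t_def)
    finally have upper: "omega \<kappa> r \<le> \<kappa> + A * \<rho> + B * \<rho> ^ 2" .
    have lower: "m * (\<rho> * (1 - \<rho>)) \<le> omega \<kappa> \<rho>"
      using omega_ge_linear[OF \<kappa> \<rho>(1)] by (simp add: m_def)
    have "(m + B) * \<rho> \<le> c" using \<rho> \<open>0 < m + B\<close> by (simp add: le_divide_eq mult.commute)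
    then have "(m + B) * \<rho> * \<rho> \<le> c * \<rho>" using \<rho> by (intro mult_right_mono)
    moreover have "m * (\<rho> * (1 - \<rho>)) - A * \<rho> - B * \<rho> ^ 2 = 2 * c * \<rho> - (m + B) * \<rho> * \<rho>"
      by (simp add: c_def algebra_simps power2_eq_square)
    ultimately have "c * \<rho> \<le> m * (\<rho> * (1 - \<rho>)) - A * \<rho> - B * \<rho> ^ 2" by linarith
    then show "c * \<rho> \<le> \<kappa> + omega \<kappa> \<rho> - omega \<kappa> r" using upper lower by simp
  qed
qed

lemma nkabs_eq_cmod: "nkabs \<kappa> n l \<xi> = cmod (Complex (of_int n * \<kappa> + \<xi>) l)"
  by (simp add: nkabs_def complex_norm)

lemma lam_eq:
  "lam \<kappa> s n l \<xi> = \<i> * of_real (of_int n * \<kappa> + \<xi> + (if s then 1 else -1) * omega \<kappa> (nkabs \<kappa> n l \<xi>))"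
  by (simp add: lam_def omega_def mult.assoc)

lemma norm_lam:
  "norm (lam \<kappa> s n l \<xi>) = \<bar>of_int n * \<kappa> + \<xi> + (if s then 1 else -1) * omega \<kappa> (nkabs \<kappa> n l \<xi>)\<bar>"
  by (simp only: lam_eq norm_mult norm_ii norm_of_real mult_1)

lemma lam_False_eq_uminus_lam_True: "lam \<kappa> False n l \<xi> = - lam \<kappa> True (- n) l (- \<xi>)"
proof -
  have "nkabs \<kappa> (- n) l (- \<xi>) = nkabs \<kappa> n l \<xi>"
    by (simp add: nkabs_def power2_eq_square algebra_simps)
  then show ?thesis by (simp add: lam_eq algebra_simps)
qed

lemma lam_True_collision_separation:
  assumes \<kappa>: "0 < \<kappa>"
  obtains c \<rho>0 where "0 < c" "0 < \<rho>0"
    "\<And>l \<xi>. sqrt (l\<^sup>2 + \<xi>\<^sup>2) \<le> \<rho>0 \<Longrightarrow>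
       c * sqrt (l\<^sup>2 + \<xi>\<^sup>2) \<le> norm (lam \<kappa> True 0 l \<xi> - lam \<kappa> True (-1) l \<xi>)"
proof -
  obtain c \<rho>0 where c: "0 < c" "0 < \<rho>0" and gap:
    "\<And>\<rho> r. 0 \<le> \<rho> \<Longrightarrow> \<rho> \<le> \<rho>0 \<Longrightarrow> 0 \<le> r \<Longrightarrow> r \<le> \<kappa> + \<rho> \<Longrightarrow>
       c * \<rho> \<le> \<kappa> + omega \<kappa> \<rho> - omega \<kappa> r"
    using omega_gap_near_self[OF \<kappa>] by blast
  show ?thesis
  proof (rule that[OF c])
    fix l \<xi> :: real
    define \<rho> where "\<rho> = cmod (Complex \<xi> l)"
    assume "sqrt (l\<^sup>2 + \<xi>\<^sup>2) \<le> \<rho>0"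
    moreover have \<rho>_eq: "sqrt (l\<^sup>2 + \<xi>\<^sup>2) = \<rho>" by (simp add: \<rho>_def complex_norm add.commute)
    ultimately have "\<rho> \<le> \<rho>0" by simp
    have "nkabs \<kappa> (-1) l \<xi> = cmod (Complex \<xi> l - of_real \<kappa>)"
      unfolding nkabs_eq_cmod by (rule arg_cong[where f = cmod]) (simp add: complex_eq_iff)
    also have "\<dots> \<le> \<kappa> + \<rho>"
      using norm_triangle_ineq4[of "Complex \<xi> l" "of_real \<kappa>"] \<kappa> by (simp add: \<rho>_def)
    finally have "c * \<rho> \<le> \<kappa> + omega \<kappa> \<rho> - omega \<kappa> (nkabs \<kappa> (-1) l \<xi>)"
      using \<open>\<rho> \<le> \<rho>0\<close> by (intro gap) (simp_all add: \<rho>_def nkabs_def)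
    moreover have "lam \<kappa> True 0 l \<xi> - lam \<kappa> True (-1) l \<xi>
        = \<i> * of_real (\<kappa> + omega \<kappa> \<rho> - omega \<kappa> (nkabs \<kappa> (-1) l \<xi>))"
      by (simp add: lam_eq nkabs_eq_cmod \<rho>_def algebra_simps)
    then have "norm (lam \<kappa> True 0 l \<xi> - lam \<kappa> True (-1) l \<xi>)
        = \<bar>\<kappa> + omega \<kappa> \<rho> - omega \<kappa> (nkabs \<kappa> (-1) l \<xi>)\<bar>"
      by (simp only: norm_mult norm_ii norm_of_real mult_1)
    ultimately show "c * sqrt (l\<^sup>2 + \<xi>\<^sup>2) \<le> norm (lam \<kappa> True 0 l \<xi> - lam \<kappa> True (-1) l \<xi>)"
      by (simp add: \<rho>_eq)
  qed
qed

lemma lam_True_bounded_away: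
  assumes \<kappa>: "0 < \<kappa>"
  obtains \<delta> where "0 < \<delta>"
    "\<And>n l \<xi>. n \<notin> {0, -1} \<Longrightarrow> \<bar>l\<bar> \<le> \<delta> \<Longrightarrow> \<bar>\<xi>\<bar> \<le> \<delta> \<Longrightarrow> \<delta> \<le> norm (lam \<kappa> True n l \<xi>)"
proof -
  obtain \<theta> where \<theta>: "0 \<le> \<theta>" "\<theta> < 1" and contraction: "\<And>r. 3 * \<kappa> / 2 \<le> r \<Longrightarrow> omega \<kappa> r \<le> \<theta> * r"
    using omega_le_contraction[OF \<kappa>] by blast
  define \<delta> where "\<delta> = (1 - \<theta>) * \<kappa> / 2"
  have "0 < \<delta>" "\<delta> \<le> \<kappa> / 2" using \<kappa> \<theta> by (simp_all add: \<delta>_def)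
  show ?thesis
  proof (rule that[OF \<open>0 < \<delta>\<close>])
    fix n :: int and l \<xi> :: real
    assume n: "n \<notin> {0, -1}" and l: "\<bar>l\<bar> \<le> \<delta>" and \<xi>: "\<bar>\<xi>\<bar> \<le> \<delta>"
    define a r where "a = of_int n * \<kappa> + \<xi>" and "r = nkabs \<kappa> n l \<xi>"
    have r: "\<bar>a\<bar> \<le> r" "r \<le> \<bar>a\<bar> + \<bar>l\<bar>"
      using abs_Re_le_cmod[of "Complex a l"] cmod_le[of "Complex a l"] by (simp_all add: r_def a_def nkabs_eq_cmod)
    have "0 \<le> omega \<kappa> r" using omega_nonneg[OF \<kappa>] r(1) by force
    have "\<delta> \<le> \<bar>a + omega \<kappa> r\<bar>"
    proof (cases "1 \<le> n")
      case True
      then have "\<kappa> \<le> of_int n * \<kappa>" using \<kappa> by simp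
      then show ?thesis using \<xi> \<open>\<delta> \<le> \<kappa> / 2\<close> \<open>0 \<le> omega \<kappa> r\<close> by (simp add: a_def)
    next
      case False
      with n have "n \<le> -2" by auto
      then have "of_int n * \<kappa> \<le> -2 * \<kappa>"
        using mult_right_mono[of "of_int n" "-2" \<kappa>] \<kappa> by simp
      then have a: "2 * \<kappa> - \<delta> \<le> \<bar>a\<bar>" using \<xi> by (simp add: a_def)
      have "omega \<kappa> r \<le> \<theta> * r"
        using a r \<open>\<delta> \<le> \<kappa> / 2\<close> by (intro contraction) simp
      also have "\<dots> \<le> \<theta> * (\<bar>a\<bar> + \<delta>)" using r l \<theta> by (intro mult_left_mono) auto
      finally have "(1 - \<theta>) * (2 * \<kappa> - \<delta>) - \<theta> * \<delta> \<le> \<bar>a\<bar> - omega \<kappa> r"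
        using mult_left_mono[OF a, of "1 - \<theta>"] \<theta> by (simp add: algebra_simps)
      moreover have "(1 - \<theta>) * (2 * \<kappa> - \<delta>) - \<theta> * \<delta> = 3 * \<delta>"
        by (simp add: \<delta>_def field_simps)
      ultimately show ?thesis using \<open>0 < \<delta>\<close> \<open>0 \<le> omega \<kappa> r\<close> by linarith
    qed
    then show "\<delta> \<le> norm (lam \<kappa> True n l \<xi>)" by (simp add: norm_lam a_def r_def)
  qed
qed

lemma lam_True_estimates:
  assumes \<kappa>: "0 < \<kappa>"
  obtains \<delta> C where "0 < \<delta>" "0 < C"
    "\<And>l \<xi>. \<bar>l\<bar> \<le> \<delta> \<Longrightarrow> \<bar>\<xi>\<bar> \<le> \<delta> \<Longrightarrow>
       C * sqrt (l\<^sup>2 + \<xi>\<^sup>2) \<le> norm (lam \<kappa> True 0 l \<xi> - lam \<kappa> True (-1) l \<xi>)"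
    "\<And>n l \<xi>. n \<notin> {0, -1} \<Longrightarrow> \<bar>l\<bar> \<le> \<delta> \<Longrightarrow> \<bar>\<xi>\<bar> \<le> \<delta> \<Longrightarrow> C \<le> norm (lam \<kappa> True n l \<xi>)"
proof -
  obtain c \<rho>0 where "0 < c" "0 < \<rho>0" and near:
    "\<And>l \<xi>. sqrt (l\<^sup>2 + \<xi>\<^sup>2) \<le> \<rho>0 \<Longrightarrow>
       c * sqrt (l\<^sup>2 + \<xi>\<^sup>2) \<le> norm (lam \<kappa> True 0 l \<xi> - lam \<kappa> True (-1) l \<xi>)"
    using lam_True_collision_separation[OF \<kappa>] by blast
  obtain \<delta> where "0 < \<delta>" and far:
    "\<And>n l \<xi>. n \<notin> {0, -1} \<Longrightarrow> \<bar>l\<bar> \<le> \<delta> \<Longrightarrow> \<bar>\<xi>\<bar> \<le> \<delta> \<Longrightarrow> \<delta> \<le> norm (lam \<kappa> True n l \<xi>)"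
    using lam_True_bounded_away[OF \<kappa>] by blast
  show ?thesis
  proof (rule that[of "min \<delta> (\<rho>0 / 2)" "min c \<delta>"])
    show "0 < min \<delta> (\<rho>0 / 2)" "0 < min c \<delta>" using \<open>0 < c\<close> \<open>0 < \<rho>0\<close> \<open>0 < \<delta>\<close> by simp_all
    fix l \<xi> :: real
    assume box: "\<bar>l\<bar> \<le> min \<delta> (\<rho>0 / 2)" "\<bar>\<xi>\<bar> \<le> min \<delta> (\<rho>0 / 2)"
    have "sqrt (l\<^sup>2 + \<xi>\<^sup>2) \<le> \<bar>l\<bar> + \<bar>\<xi>\<bar>"
      using cmod_le[of "Complex l \<xi>"] by (simp add: complex_norm)
    then have "sqrt (l\<^sup>2 + \<xi>\<^sup>2) \<le> \<rho>0" using box by simp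
    moreover have "min c \<delta> * sqrt (l\<^sup>2 + \<xi>\<^sup>2) \<le> c * sqrt (l\<^sup>2 + \<xi>\<^sup>2)"
      by (intro mult_right_mono) simp_all
    ultimately show "min c \<delta> * sqrt (l\<^sup>2 + \<xi>\<^sup>2) \<le> norm (lam \<kappa> True 0 l \<xi> - lam \<kappa> True (-1) l \<xi>)"
      using near[of l \<xi>] by simp
    fix n :: int
    assume "n \<notin> {0, -1}"
    then show "min c \<delta> \<le> norm (lam \<kappa> True n l \<xi>)" using far[of n l \<xi>] box by simp
  qed
qed

theorem lemma3p3:
  fixes \<kappa> :: real
  assumes "\<kappa> > 0"
  shows "\<exists>\<delta>1 C1. \<delta>1 > 0 \<and> C1 > 0 \<and>
    (\<forall>l \<xi>. l \<in> {-\<delta>1..\<delta>1} \<and> \<xi> \<in> {-\<delta>1..\<delta>1} \<longrightarrow>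
       norm (lam \<kappa> True 0 l \<xi> - lam \<kappa> True (-1) l \<xi>) \<ge> C1 * sqrt (l\<^sup>2 + \<xi>\<^sup>2) \<and>
       norm (lam \<kappa> False 0 l \<xi> - lam \<kappa> False 1 l \<xi>) \<ge> C1 * sqrt (l\<^sup>2 + \<xi>\<^sup>2) \<and>
       (\<forall>(n::int) (s::bool). (n, s) \<notin> {(0, True), (0, False), (1, False), (-1, True)} \<longrightarrow>
          norm (lam \<kappa> s n l \<xi>) \<ge> C1))"
proof -
  obtain \<delta> C where "0 < \<delta>" "0 < C"
    and near_True: "\<And>l \<xi>. \<bar>l\<bar> \<le> \<delta> \<Longrightarrow> \<bar>\<xi>\<bar> \<le> \<delta> \<Longrightarrow>
       C * sqrt (l\<^sup>2 + \<xi>\<^sup>2) \<le> norm (lam \<kappa> True 0 l \<xi> - lam \<kappa> True (-1) l \<xi>)"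
    and far_True: "\<And>n l \<xi>. n \<notin> {0, -1} \<Longrightarrow> \<bar>l\<bar> \<le> \<delta> \<Longrightarrow> \<bar>\<xi>\<bar> \<le> \<delta> \<Longrightarrow>
       C \<le> norm (lam \<kappa> True n l \<xi>)"
    using lam_True_estimates[OF assms] by blast
  show ?thesis
  proof (intro exI conjI allI impI)
    fix l \<xi> :: real
    assume "l \<in> {-\<delta>..\<delta>} \<and> \<xi> \<in> {-\<delta>..\<delta>}"
    then have box: "\<bar>l\<bar> \<le> \<delta>" "\<bar>\<xi>\<bar> \<le> \<delta>" "\<bar>- \<xi>\<bar> \<le> \<delta>" by auto
    show "C * sqrt (l\<^sup>2 + \<xi>\<^sup>2) \<le> norm (lam \<kappa> True 0 l \<xi> - lam \<kappa> True (-1) l \<xi>)"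
      using near_True box by blast
    show "C * sqrt (l\<^sup>2 + \<xi>\<^sup>2) \<le> norm (lam \<kappa> False 0 l \<xi> - lam \<kappa> False 1 l \<xi>)"
      using near_True[of l "- \<xi>"] box by (simp add: lam_False_eq_uminus_lam_True norm_minus_commute)
    fix n :: int and s :: bool
    assume "(n, s) \<notin> {(0, True), (0, False), (1, False), (-1, True)}"
    then show "C \<le> norm (lam \<kappa> s n l \<xi>)"
      using far_True[of n l \<xi>] far_True[of "- n" l "- \<xi>"] box
      by (cases s) (auto simp: lam_False_eq_uminus_lam_True)
  qed (use \<open>0 < \<delta>\<close> \<open>0 < C\<close> in auto)
qed

end
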